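(* Let $S=(\mathcal{E},\Sigma,X,\mathcal{O})$ be an entity. Then $S$ is state atomic (i.e. for $p,q\in\Sigma$, if $O(e,p)\subseteq O(e,q)$ for all $e\in\mathcal{E}$ then $p=q$) if and only if the state eigen closure operator $cl_{eig}$ on $\Sigma$ satisfies the $T_1$ separation axiom.
   Context: An entity $S=(\mathcal{E},\Sigma,X,\mathcal{O})$ consists of a set $\mathcal{E}$, a set $\Sigma$, and for each $e\in\mathcal{E}$, $p\in\Sigma$ a nonempty set $O(e,p)$, with $X=\bigcup_{e,p}O(e,p)$. Let $O(e)=\bigcup_{p}O(e,p)$. For $e\in\mathcal{E}$, $eig_e:\mathcal{P}(O(e))\to\mathcal{P}(\Sigma)$ is $p\in eig_e(A)\iff O(e,p)\subseteq A$, and $\mathcal{F}(e)=\{eig_e(A):A\subseteq O(e)\}$. The state eigen closure system $\mathcal{F}_{eig}$ is the set of all intersections of families of elements of $\bigcup_e\mathcal{F}(e)$, and $cl_{eig}(K)=\bigcap\{F\in\mathcal{F}_{eig}:K\subseteq F\}$ for $K\subseteq\Sigma$. A closure operator $cl$ on $W$ satisfies $T_1$ iff $cl(\{w\})=\{w\}$ for all $w\in W$. *)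

theory Defs
  imports Main
begin

text \<open>An entity: a set of entities E, a set of states Sigma, and outcome sets
  Out e p (nonempty for e in E, p in Sigma). X is the union of all Out e p.\<close>

definition entity :: "'e set \<Rightarrow> 's set \<Rightarrow> ('e \<Rightarrow> 's \<Rightarrow> 'x set) \<Rightarrow> bool" where
  "entity E \<Sigma> Out \<longleftrightarrow> (\<forall>e\<in>E. \<forall>p\<in>\<Sigma>. Out e p \<noteq> {})"

definition outcomes_of :: "'s set \<Rightarrow> ('e \<Rightarrow> 's \<Rightarrow> 'x set) \<Rightarrow> 'e \<Rightarrow> 'x set" where
  "outcomes_of \<Sigma> Out e = (\<Union>p\<in>\<Sigma>. Out e p)"

definition eig :: "'s set \<Rightarrow> ('e \<Rightarrow> 's \<Rightarrow> 'x set) \<Rightarrow> 'e \<Rightarrow> 'x set \<Rightarrow> 's set" where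
  "eig \<Sigma> Out e A = {p\<in>\<Sigma>. Out e p \<subseteq> A}"

definition eig_family :: "'s set \<Rightarrow> ('e \<Rightarrow> 's \<Rightarrow> 'x set) \<Rightarrow> 'e \<Rightarrow> 's set set" where
  "eig_family \<Sigma> Out e = {eig \<Sigma> Out e A | A. A \<subseteq> outcomes_of \<Sigma> Out e}"

text \<open>Intersections of families (subsets of Sigma; the empty family gives Sigma).\<close>
definition F_eig :: "'e set \<Rightarrow> 's set \<Rightarrow> ('e \<Rightarrow> 's \<Rightarrow> 'x set) \<Rightarrow> 's set set" where
  "F_eig E \<Sigma> Out = {\<Sigma> \<inter> \<Inter>\<F> | \<F>. \<F> \<subseteq> (\<Union>e\<in>E. eig_family \<Sigma> Out e)}"

definition cl_eig :: "'e set \<Rightarrow> 's set \<Rightarrow> ('e \<Rightarrow> 's \<Rightarrow> 'x set) \<Rightarrow> 's set \<Rightarrow> 's set" where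
  "cl_eig E \<Sigma> Out K = \<Sigma> \<inter> \<Inter>{F\<in>F_eig E \<Sigma> Out. K \<subseteq> F}"

definition state_atomic :: "'e set \<Rightarrow> 's set \<Rightarrow> ('e \<Rightarrow> 's \<Rightarrow> 'x set) \<Rightarrow> bool" where
  "state_atomic E \<Sigma> Out \<longleftrightarrow>
     (\<forall>p\<in>\<Sigma>. \<forall>q\<in>\<Sigma>. (\<forall>e\<in>E. Out e p \<subseteq> Out e q) \<longrightarrow> p = q)"

definition T1_closure :: "'w set \<Rightarrow> ('w set \<Rightarrow> 'w set) \<Rightarrow> bool" where
  "T1_closure W cl \<longleftrightarrow> (\<forall>w\<in>W. cl {w} = {w})"

end

theory Submission
  imports Defs
begin

text \<open>For a set of states \<open>K\<close>, the smallest eigen set of \<open>e\<close> containing \<open>K\<close> is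
  \<open>eig\<^sub>e(\<Union>p\<in>K. O(e,p))\<close>; intersecting these over all \<open>e\<close> computes \<open>cl\<^sub>e\<^sub>i\<^sub>g(K)\<close>.
  In particular \<open>cl\<^sub>e\<^sub>i\<^sub>g({p})\<close> consists of the states \<open>q\<close> with \<open>O(e,q) \<subseteq> O(e,p)\<close> for all \<open>e\<close>,
  so \<open>cl\<^sub>e\<^sub>i\<^sub>g({p}) = {p}\<close> for every \<open>p\<close> says exactly that this preorder is antisymmetric,
  which is state atomicity.\<close>

lemma eig_subset: "eig \<Sigma> Out e A \<subseteq> \<Sigma>"
  by (auto simp: eig_def)

lemma eig_in_F_eig:
  assumes "e \<in> E" and "A \<subseteq> outcomes_of \<Sigma> Out e"
  shows "eig \<Sigma> Out e A \<in> F_eig E \<Sigma> Out"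
proof -
  have "eig \<Sigma> Out e A \<in> eig_family \<Sigma> Out e"
    using assms(2) unfolding eig_family_def by blast
  then have "\<Sigma> \<inter> \<Inter>{eig \<Sigma> Out e A} \<in> F_eig E \<Sigma> Out"
    using assms(1) unfolding F_eig_def by blast
  then show ?thesis
    using eig_subset[of \<Sigma> Out e A] by (simp add: Int_absorb1)
qed

lemma F_eig_closed_below:
  assumes "F \<in> F_eig E \<Sigma> Out" and "K \<subseteq> F" and "q \<in> \<Sigma>"
    and below: "\<forall>e\<in>E. Out e q \<subseteq> (\<Union>p\<in>K. Out e p)"
  shows "q \<in> F"
proof -
  obtain \<F> where F: "F = \<Sigma> \<inter> \<Inter>\<F>" and \<F>: "\<F> \<subseteq> (\<Union>e\<in>E. eig_family \<Sigma> Out e)"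
    using assms(1) unfolding F_eig_def by blast
  have "q \<in> G" if "G \<in> \<F>" for G
  proof -
    obtain e A where "e \<in> E" and G: "G = eig \<Sigma> Out e A"
      using \<F> \<open>G \<in> \<F>\<close> unfolding eig_family_def by blast
    have "Out e p \<subseteq> A" if "p \<in> K" for p
      using \<open>K \<subseteq> F\<close> F \<open>G \<in> \<F>\<close> G that by (auto simp: eig_def)
    then show ?thesis
      using below \<open>e \<in> E\<close> \<open>q \<in> \<Sigma>\<close> G by (fastforce simp: eig_def)
  qed
  then show ?thesis
    using F \<open>q \<in> \<Sigma>\<close> by blast
qed

lemma cl_eig_eq:
  assumes "K \<subseteq> \<Sigma>"
  shows "cl_eig E \<Sigma> Out K = {q\<in>\<Sigma>. \<forall>e\<in>E. Out e q \<subseteq> (\<Union>p\<in>K. Out e p)}"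
proof
  show "cl_eig E \<Sigma> Out K \<subseteq> {q\<in>\<Sigma>. \<forall>e\<in>E. Out e q \<subseteq> (\<Union>p\<in>K. Out e p)}"
  proof
    fix q assume q: "q \<in> cl_eig E \<Sigma> Out K"
    have "Out e q \<subseteq> (\<Union>p\<in>K. Out e p)" if "e \<in> E" for e
    proof -
      let ?A = "\<Union>p\<in>K. Out e p"
      have "?A \<subseteq> outcomes_of \<Sigma> Out e"
        using assms by (auto simp: outcomes_of_def)
      then have "eig \<Sigma> Out e ?A \<in> F_eig E \<Sigma> Out"
        by (rule eig_in_F_eig[OF \<open>e \<in> E\<close>])
      moreover have "K \<subseteq> eig \<Sigma> Out e ?A"
        using assms by (auto simp: eig_def)
      ultimately have "q \<in> eig \<Sigma> Out e ?A"
        using q unfolding cl_eig_def by blast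
      then show ?thesis
        by (simp add: eig_def)
    qed
    moreover have "q \<in> \<Sigma>"
      using q by (simp add: cl_eig_def)
    ultimately show "q \<in> {q\<in>\<Sigma>. \<forall>e\<in>E. Out e q \<subseteq> (\<Union>p\<in>K. Out e p)}"
      by blast
  qed
next
  show "{q\<in>\<Sigma>. \<forall>e\<in>E. Out e q \<subseteq> (\<Union>p\<in>K. Out e p)} \<subseteq> cl_eig E \<Sigma> Out K"
  proof
    fix q assume q: "q \<in> {q\<in>\<Sigma>. \<forall>e\<in>E. Out e q \<subseteq> (\<Union>p\<in>K. Out e p)}"
    have "q \<in> F" if "F \<in> F_eig E \<Sigma> Out" and "K \<subseteq> F" for F
      using F_eig_closed_below[OF that] q by blast
    then show "q \<in> cl_eig E \<Sigma> Out K"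
      using q unfolding cl_eig_def by blast
  qed
qed

corollary cl_eig_singleton:
  assumes "p \<in> \<Sigma>"
  shows "cl_eig E \<Sigma> Out {p} = {q\<in>\<Sigma>. \<forall>e\<in>E. Out e q \<subseteq> Out e p}"
  using assms by (simp add: cl_eig_eq)

theorem mainTheorem5:
  fixes E :: "'e set" and \<Sigma> :: "'s set" and Out :: "'e \<Rightarrow> 's \<Rightarrow> 'x set"
  assumes "entity E \<Sigma> Out"
  shows "state_atomic E \<Sigma> Out \<longleftrightarrow> T1_closure \<Sigma> (cl_eig E \<Sigma> Out)"
  unfolding state_atomic_def T1_closure_def
  by (auto simp: cl_eig_singleton)

end
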